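(* Let $N\in\mathbb N$, let $\{\Omega_k\}_k\subset\mathscr A$ be $N$-admissible sets and let $M\le N$ be a positive integer. Then: (i) if $\Omega_1\subset\Omega_2$, then $h_M(\Omega_1)\ge h_M(\Omega_2)$; (ii) if (P.6) holds and $\mathfrak m(\Omega_k)\to0$, then $h_M(\Omega_k)\to+\infty$; (iii) if (P.4), (P.5), (P.6) hold and $\Omega_k\to\Omega$ in $L^1(X,\mathfrak m)$ for some $\Omega\in\mathscr A$ with $\mathfrak m(\Omega)\in(0,+\infty)$, then $h_M(\Omega)\le\liminf_k h_M(\Omega_k)$ (with the convention $h_M(\Omega)=+\infty$ if $\Omega$ is not $M$-admissible). If moreover (P.3) holds, $P(\Omega)<+\infty$ and $P(\Omega_k)\to P(\Omega)$, then $h_M(\Omega)=\lim_k h_M(\Omega_k)$.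
   Context: $(X,\mathscr A,\mathfrak m)$ is a non-negative $\sigma$-finite measure space; for $A,B\in\mathscr A$, "$A\subset B$" means $\mathfrak m(A\setminus B)=0$. $P\colon\mathscr A\to[0,+\infty]$ is a proper functional (the perimeter). Convergence of sets in $L^1(X,\mathfrak m)$ means $L^1$ convergence of characteristic functions. Properties: (P.3) $P(E\cap F)+P(E\cup F)\le P(E)+P(F)$ for all $E,F\in\mathscr A$. (P.4) if $\chi_{E_k}\to\chi_E$ in $L^1(X,\mathfrak m)$ then $P(E)\le\liminf_k P(E_k)$. (P.5) for every $c\ge0$, $\{\chi_E: E\in\mathscr A,\ P(E)\le c\}$ is compact in $L^1(X,\mathfrak m)$. (P.6) there is $f\colon(0,+\infty)\to(0,+\infty)$ with $\lim_{\varepsilon\to0^+}f(\varepsilon)=+\infty$ such that $\mathfrak m(E)\le\varepsilon$ implies $P(E)\ge f(\varepsilon)\mathfrak m(E)$. An $N$-cluster is a family $\{\mathcal E(i)\}_{i=1}^N\subset\mathscr A$ with $0<\mathfrak m(\mathcal E(i))<+\infty$, $P(\mathcal E(i))<+\infty$, $\mathfrak m(\mathcal E(i)\cap\mathcal E(j))=0$ for $i\neq j$. $\Omega$ is $N$-admissible if it contains an $N$-cluster (then it is $M$-admissible for $M\le N$). $h_M(\Omega)=\inf\{\sum_{i=1}^M P(\mathcal E(i))/\mathfrak m(\mathcal E(i)):\mathcal E \text{ an } M\text{-cluster in }\Omega\}$. *)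

theory Defs
  imports "HOL-Analysis.Analysis"
begin

text \<open>Sets are identified up to null sets: "A \<subset> B" means m(A - B) = 0.\<close>
definition ae_subset :: "'a measure \<Rightarrow> 'a set \<Rightarrow> 'a set \<Rightarrow> bool" where
  "ae_subset m A B \<longleftrightarrow> emeasure m (A - B) = 0"

definition L1_conv_sets :: "'a measure \<Rightarrow> (nat \<Rightarrow> 'a set) \<Rightarrow> 'a set \<Rightarrow> bool" where
  "L1_conv_sets m E F \<longleftrightarrow>
     ((\<lambda>k. \<integral>\<^sup>+ x. ennreal \<bar>indicator (E k) x - indicator F x :: real\<bar> \<partial>m) \<longlonglongrightarrow> 0)"

definition proper_functional :: "'a measure \<Rightarrow> ('a set \<Rightarrow> ennreal) \<Rightarrow> bool" where
  "proper_functional m P \<longleftrightarrow> (\<exists>E\<in>sets m. P E < top)"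

definition P3 :: "'a measure \<Rightarrow> ('a set \<Rightarrow> ennreal) \<Rightarrow> bool" where
  "P3 m P \<longleftrightarrow> (\<forall>E\<in>sets m. \<forall>F\<in>sets m. P (E \<inter> F) + P (E \<union> F) \<le> P E + P F)"

definition P4 :: "'a measure \<Rightarrow> ('a set \<Rightarrow> ennreal) \<Rightarrow> bool" where
  "P4 m P \<longleftrightarrow> (\<forall>E F. (\<forall>k. E k \<in> sets m) \<longrightarrow> F \<in> sets m \<longrightarrow> L1_conv_sets m E F
      \<longrightarrow> P F \<le> liminf (\<lambda>k. P (E k)))"

definition P5 :: "'a measure \<Rightarrow> ('a set \<Rightarrow> ennreal) \<Rightarrow> bool" where
  "P5 m P \<longleftrightarrow> (\<forall>c::real. c \<ge> 0 \<longrightarrow> (\<forall>E::nat \<Rightarrow> 'a set. (\<forall>k. E k \<in> sets m \<and> P (E k) \<le> ennreal c) \<longrightarrow>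
      (\<exists>(r::nat \<Rightarrow> nat) F. strict_mono r \<and> F \<in> sets m \<and> P F \<le> ennreal c \<and> L1_conv_sets m (E \<circ> r) F)))"

definition P6 :: "'a measure \<Rightarrow> ('a set \<Rightarrow> ennreal) \<Rightarrow> bool" where
  "P6 m P \<longleftrightarrow> (\<exists>f :: real \<Rightarrow> real. (\<forall>\<epsilon>>0. f \<epsilon> > 0) \<and> filterlim f at_top (at_right 0) \<and>
      (\<forall>\<epsilon>>0. \<forall>E\<in>sets m. emeasure m E \<le> ennreal \<epsilon> \<longrightarrow> ennreal (f \<epsilon>) * emeasure m E \<le> P E))"

definition is_cluster :: "'a measure \<Rightarrow> ('a set \<Rightarrow> ennreal) \<Rightarrow> nat \<Rightarrow> (nat \<Rightarrow> 'a set) \<Rightarrow> bool" where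
  "is_cluster m P N C \<longleftrightarrow>
     (\<forall>i\<in>{1..N}. C i \<in> sets m \<and> 0 < emeasure m (C i) \<and> emeasure m (C i) < top \<and> P (C i) < top) \<and>
     (\<forall>i\<in>{1..N}. \<forall>j\<in>{1..N}. i \<noteq> j \<longrightarrow> emeasure m (C i \<inter> C j) = 0)"

definition cluster_in :: "'a measure \<Rightarrow> ('a set \<Rightarrow> ennreal) \<Rightarrow> nat \<Rightarrow> (nat \<Rightarrow> 'a set) \<Rightarrow> 'a set \<Rightarrow> bool" where
  "cluster_in m P N C \<Omega> \<longleftrightarrow> is_cluster m P N C \<and> (\<forall>i\<in>{1..N}. ae_subset m (C i) \<Omega>)"

definition admissible :: "'a measure \<Rightarrow> ('a set \<Rightarrow> ennreal) \<Rightarrow> nat \<Rightarrow> 'a set \<Rightarrow> bool" where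
  "admissible m P N \<Omega> \<longleftrightarrow> \<Omega> \<in> sets m \<and> (\<exists>C. cluster_in m P N C \<Omega>)"

text \<open>h_M(Omega); Inf of the empty set is top, matching the convention h_M = +\<infinity>.\<close>
definition h_const :: "'a measure \<Rightarrow> ('a set \<Rightarrow> ennreal) \<Rightarrow> nat \<Rightarrow> 'a set \<Rightarrow> ennreal" where
  "h_const m P M \<Omega> = Inf {(\<Sum>i\<in>{1..M}. P (C i) / emeasure m (C i)) | C. cluster_in m P M C \<Omega>}"

end

theory Submission
  imports Defs
begin

text \<open>
  Part (i) holds because a cluster in a set is also a cluster in any a.e.-larger set. For (ii),
  the first chamber of a cluster in \<open>\<Omega>\<^sub>k\<close> has measure at most \<open>m(\<Omega>\<^sub>k) \<rightarrow> 0\<close>,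
  so by (P.6) its ratio \<open>P/m\<close> blows up. For the lower bound in (iii), pick almost optimal
  clusters along a subsequence: their chambers have bounded perimeter and, by (P.6), measure
  bounded away from 0, so (P.5) provides \<open>L\<^sup>1\<close>-limits of the chambers, which form a cluster
  in \<open>\<Omega>\<close> whose ratios are bounded by the limiting ratios thanks to (P.4). For the upper bound,
  intersect a fixed cluster \<open>C\<close> in \<open>\<Omega>\<close> with \<open>\<Omega>\<^sub>k\<close>: submodularity (P.3), lower
  semicontinuity (P.4) along \<open>C \<union> \<Omega>\<^sub>k \<rightarrow> \<Omega>\<close> and \<open>P(\<Omega>\<^sub>k) \<rightarrow> P(\<Omega>)\<close> give
  \<open>limsup P(C \<inter> \<Omega>\<^sub>k) \<le> P(C)\<close>.
\<close>

lemma emeasure_le_add_of_subset_Un: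
  assumes "A \<subseteq> B \<union> C" "B \<in> sets m" "C \<in> sets m"
  shows "emeasure m A \<le> emeasure m B + emeasure m C"
  using assms by (meson emeasure_mono emeasure_subadditive order_trans sets.Un)

lemma ae_subset_trans:
  assumes "ae_subset m A B" "ae_subset m B C" "A \<in> sets m" "B \<in> sets m" "C \<in> sets m"
  shows "ae_subset m A C"
proof -
  have "emeasure m (A - C) \<le> emeasure m (A - B) + emeasure m (B - C)"
    using assms by (intro emeasure_le_add_of_subset_Un) auto
  then show ?thesis using assms unfolding ae_subset_def by simp
qed

lemma emeasure_mono_ae_subset:
  assumes "ae_subset m A B" "A \<in> sets m" "B \<in> sets m"
  shows "emeasure m A \<le> emeasure m B"
proof -
  have "emeasure m A \<le> emeasure m B + emeasure m (A - B)"
    using assms by (intro emeasure_le_add_of_subset_Un) auto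
  then show ?thesis using assms unfolding ae_subset_def by simp
qed

lemma tendsto_ennreal_epsilon:
  fixes a :: "nat \<Rightarrow> ennreal"
  assumes upper: "\<And>e. 0 < e \<Longrightarrow> eventually (\<lambda>k. a k \<le> L + ennreal e) sequentially"
    and lower: "\<And>e. 0 < e \<Longrightarrow> eventually (\<lambda>k. L \<le> a k + ennreal e) sequentially"
  shows "a \<longlonglongrightarrow> L"
proof (rule Liminf_eq_Limsup)
  have "limsup a \<le> L"
    by (rule ennreal_le_epsilon) (use Limsup_bounded[OF upper] in auto)
  moreover have "L \<le> liminf a"
  proof (rule ennreal_le_epsilon)
    fix e :: real assume "0 < e"
    have "eventually (\<lambda>k. L - ennreal e \<le> a k) sequentially"
      using lower[OF \<open>0 < e\<close>] by eventually_elim (simp add: ennreal_minus_le_iff add.commute)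
    then have "L - ennreal e \<le> liminf a" by (rule Liminf_bounded)
    then show "L \<le> liminf a + ennreal e" by (simp add: ennreal_minus_le_iff add.commute)
  qed
  moreover have "liminf a \<le> limsup a" by (simp add: Liminf_le_Limsup)
  ultimately show "liminf a = L" "limsup a = L" by auto
qed simp

lemma tendsto_divide_ennreal:
  fixes u v :: "nat \<Rightarrow> ennreal"
  assumes "u \<longlonglongrightarrow> a" "v \<longlonglongrightarrow> b" "0 < b" "b < top"
  shows "(\<lambda>k. u k / v k) \<longlonglongrightarrow> a / b"
proof -
  have "(\<lambda>k. inverse (v k)) \<longlonglongrightarrow> inverse b"
    by (rule continuous_on_tendsto_compose[where s=UNIV,
          OF continuous_on_inverse_ennreal[OF continuous_on_id] assms(2)]) auto
  then show ?thesis
    using assms unfolding divide_ennreal_def by (intro tendsto_mult_ennreal) auto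
qed

lemma ennreal_le_divide_of_mult_le:
  fixes a p x :: ennreal
  assumes "a * x \<le> p" "0 < x" "x < top"
  shows "a \<le> p / x"
proof -
  have "a = a * x / x" using assms by (simp add: mult_divide_eq_ennreal)
  also have "\<dots> \<le> p / x" using assms(1) by (rule divide_right_mono_ennreal)
  finally show ?thesis .
qed

lemma eventually_less_add_of_le_Liminf:
  fixes b :: "nat \<Rightarrow> ennreal"
  assumes "q \<le> liminf b" "q \<noteq> top" "0 < e"
  shows "eventually (\<lambda>k. q < b k + ennreal e) sequentially"
proof (rule less_LiminfD)
  have "q < q + ennreal e" using assms by (simp add: ennreal_add_left_cancel_less)
  also have "\<dots> \<le> liminf b + ennreal e" using assms by (simp add: add_right_mono)
  also have "\<dots> = liminf (\<lambda>k. b k + ennreal e)" by (simp add: Liminf_add_const)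
  finally show "q < liminf (\<lambda>k. b k + ennreal e)" .
qed

lemma frequently_imp_strict_mono_subseq:
  assumes "frequently Q sequentially"
  obtains s :: "nat \<Rightarrow> nat" where "strict_mono s" "\<And>k. Q (s k)"
proof -
  have "infinite {k. Q k}"
    using assms unfolding frequently_sequentially infinite_nat_iff_unbounded_le by auto
  then show ?thesis using infinite_enumerate that by blast
qed

lemma L1_conv_sets_iff_sym_diff:
  assumes "\<And>k. E k \<in> sets m" "F \<in> sets m"
  shows "L1_conv_sets m E F \<longleftrightarrow> (\<lambda>k. emeasure m (sym_diff (E k) F)) \<longlonglongrightarrow> 0"
proof -
  have "(\<lambda>x. ennreal \<bar>indicator (E k) x - indicator F x :: real\<bar>) = indicator (sym_diff (E k) F)" for k
    by (auto simp: indicator_def)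
  moreover have "sym_diff (E k) F \<in> sets m" for k using assms by auto
  ultimately show ?thesis unfolding L1_conv_sets_def by simp
qed

lemma L1_conv_sets_subseq:
  "L1_conv_sets m E F \<Longrightarrow> strict_mono r \<Longrightarrow> L1_conv_sets m (E \<circ> r) F"
  unfolding L1_conv_sets_def by (drule LIMSEQ_subseq_LIMSEQ) (auto simp: o_def)

lemma L1_conv_sets_dominated:
  assumes "L1_conv_sets m E F" "\<And>k. E k \<in> sets m" "F \<in> sets m" "\<And>k. E' k \<in> sets m" "F' \<in> sets m"
    and "\<And>k. emeasure m (sym_diff (E' k) F') \<le> emeasure m (sym_diff (E k) F)"
  shows "L1_conv_sets m E' F'"
proof -
  have "(\<lambda>k. emeasure m (sym_diff (E' k) F')) \<longlonglongrightarrow> 0"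
  proof (rule tendsto_sandwich[of "\<lambda>_. 0" _ _ "\<lambda>k. emeasure m (sym_diff (E k) F)"])
    show "(\<lambda>k. emeasure m (sym_diff (E k) F)) \<longlonglongrightarrow> 0"
      using assms by (simp add: L1_conv_sets_iff_sym_diff)
  qed (simp_all add: assms(6))
  then show ?thesis using assms by (simp add: L1_conv_sets_iff_sym_diff)
qed

lemma L1_conv_sets_emeasure:
  assumes "L1_conv_sets m E F" "\<And>k. E k \<in> sets m" "F \<in> sets m"
  shows "(\<lambda>k. emeasure m (E k)) \<longlonglongrightarrow> emeasure m F"
proof (rule tendsto_ennreal_epsilon)
  fix e :: real assume "0 < e"
  have "eventually (\<lambda>k. emeasure m (sym_diff (E k) F) < ennreal e) sequentially"
    using assms \<open>0 < e\<close> by (intro order_tendstoD(2)) (auto simp: L1_conv_sets_iff_sym_diff)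
  then have small: "eventually (\<lambda>k. emeasure m (sym_diff (E k) F) \<le> ennreal e) sequentially"
    by (rule eventually_mono) simp
  have bound: "emeasure m (E k) \<le> emeasure m F + emeasure m (sym_diff (E k) F)"
    "emeasure m F \<le> emeasure m (E k) + emeasure m (sym_diff (E k) F)" for k
    using assms by (auto intro!: emeasure_le_add_of_subset_Un)
  show "eventually (\<lambda>k. emeasure m (E k) \<le> emeasure m F + ennreal e) sequentially"
    using small by eventually_elim (use bound(1) in \<open>meson add_left_mono order_trans\<close>)
  show "eventually (\<lambda>k. emeasure m F \<le> emeasure m (E k) + ennreal e) sequentially"
    using small by eventually_elim (use bound(2) in \<open>meson add_left_mono order_trans\<close>)
qed

lemma ae_subset_L1_limit:
  assumes "L1_conv_sets m E F" "L1_conv_sets m \<Omega>s \<Omega>" "\<And>k. ae_subset m (E k) (\<Omega>s k)"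
    and "\<And>k. E k \<in> sets m" "F \<in> sets m" "\<And>k. \<Omega>s k \<in> sets m" "\<Omega> \<in> sets m"
  shows "ae_subset m F \<Omega>"
proof -
  let ?d = "\<lambda>k. emeasure m (sym_diff (E k) F) + emeasure m (sym_diff (\<Omega>s k) \<Omega>)"
  have "emeasure m (F - \<Omega>) \<le> ?d k" for k
  proof -
    have "emeasure m (F - \<Omega>) \<le> emeasure m ((E k - \<Omega>s k) \<union> sym_diff (E k) F) + emeasure m (sym_diff (\<Omega>s k) \<Omega>)"
      using assms by (intro emeasure_le_add_of_subset_Un) auto
    also have "\<dots> \<le> emeasure m (E k - \<Omega>s k) + emeasure m (sym_diff (E k) F) + emeasure m (sym_diff (\<Omega>s k) \<Omega>)"
      using assms by (intro add_right_mono emeasure_subadditive) auto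
    finally show ?thesis using assms(3)[of k] unfolding ae_subset_def by (simp add: add.assoc)
  qed
  moreover have "?d \<longlonglongrightarrow> 0"
    using assms by (intro tendsto_add_zero) (auto simp: L1_conv_sets_iff_sym_diff)
  ultimately have "emeasure m (F - \<Omega>) \<le> 0"
    by (intro LIMSEQ_le_const[of ?d]) auto
  then show ?thesis unfolding ae_subset_def by simp
qed

lemma null_Int_L1_limit:
  assumes "L1_conv_sets m E F" "L1_conv_sets m E' F'" "\<And>k. emeasure m (E k \<inter> E' k) = 0"
    and "\<And>k. E k \<in> sets m" "F \<in> sets m" "\<And>k. E' k \<in> sets m" "F' \<in> sets m"
  shows "emeasure m (F \<inter> F') = 0"
proof -
  let ?d = "\<lambda>k. emeasure m (sym_diff (E k) F) + emeasure m (sym_diff (E' k) F')"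
  have "emeasure m (F \<inter> F') \<le> ?d k" for k
  proof -
    have "emeasure m (F \<inter> F') \<le> emeasure m ((E k \<inter> E' k) \<union> sym_diff (E k) F) + emeasure m (sym_diff (E' k) F')"
      using assms by (intro emeasure_le_add_of_subset_Un) auto
    also have "\<dots> \<le> emeasure m (E k \<inter> E' k) + emeasure m (sym_diff (E k) F) + emeasure m (sym_diff (E' k) F')"
      using assms by (intro add_right_mono emeasure_subadditive) auto
    finally show ?thesis using assms(3)[of k] by (simp add: add.assoc)
  qed
  moreover have "?d \<longlonglongrightarrow> 0"
    using assms by (intro tendsto_add_zero) (auto simp: L1_conv_sets_iff_sym_diff)
  ultimately have "emeasure m (F \<inter> F') \<le> 0"
    by (intro LIMSEQ_le_const[of ?d]) auto
  then show ?thesis by simp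
qed

lemma L1_conv_sets_Un_ae_subset:
  assumes "L1_conv_sets m \<Omega>s \<Omega>" "ae_subset m C \<Omega>"
    and "\<And>k. \<Omega>s k \<in> sets m" "\<Omega> \<in> sets m" "C \<in> sets m"
  shows "L1_conv_sets m (\<lambda>k. C \<union> \<Omega>s k) \<Omega>"
proof (rule L1_conv_sets_dominated[OF assms(1,3,4)])
  fix k
  have "emeasure m (sym_diff (C \<union> \<Omega>s k) \<Omega>) \<le> emeasure m (C - \<Omega>) + emeasure m (sym_diff (\<Omega>s k) \<Omega>)"
    using assms by (intro emeasure_le_add_of_subset_Un) auto
  then show "emeasure m (sym_diff (C \<union> \<Omega>s k) \<Omega>) \<le> emeasure m (sym_diff (\<Omega>s k) \<Omega>)"
    using assms(2) unfolding ae_subset_def by simp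
qed (use assms in auto)

lemma L1_conv_sets_Int_ae_subset:
  assumes "L1_conv_sets m \<Omega>s \<Omega>" "ae_subset m C \<Omega>"
    and "\<And>k. \<Omega>s k \<in> sets m" "\<Omega> \<in> sets m" "C \<in> sets m"
  shows "L1_conv_sets m (\<lambda>k. C \<inter> \<Omega>s k) C"
proof (rule L1_conv_sets_dominated[OF assms(1,3,4)])
  fix k
  have "emeasure m (sym_diff (C \<inter> \<Omega>s k) C) \<le> emeasure m (C - \<Omega>) + emeasure m (sym_diff (\<Omega>s k) \<Omega>)"
    using assms by (intro emeasure_le_add_of_subset_Un) auto
  then show "emeasure m (sym_diff (C \<inter> \<Omega>s k) C) \<le> emeasure m (sym_diff (\<Omega>s k) \<Omega>)"
    using assms(2) unfolding ae_subset_def by simp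
qed (use assms in auto)

abbreviation cluster_ratio :: "'a measure \<Rightarrow> ('a set \<Rightarrow> ennreal) \<Rightarrow> nat \<Rightarrow> (nat \<Rightarrow> 'a set) \<Rightarrow> ennreal"
  where "cluster_ratio m P M C \<equiv> \<Sum>i = 1..M. P (C i) / emeasure m (C i)"

lemma cluster_inD:
  assumes "cluster_in m P M C \<Omega>" "i \<in> {1..M}"
  shows "C i \<in> sets m" "0 < emeasure m (C i)" "emeasure m (C i) < top" "P (C i) < top"
    "ae_subset m (C i) \<Omega>"
  using assms unfolding cluster_in_def is_cluster_def by auto

lemma cluster_in_null_Int:
  assumes "cluster_in m P M C \<Omega>" "i \<in> {1..M}" "j \<in> {1..M}" "i \<noteq> j"
  shows "emeasure m (C i \<inter> C j) = 0"
  using assms unfolding cluster_in_def is_cluster_def by auto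

lemma emeasure_cluster_le:
  assumes "cluster_in m P M C \<Omega>" "i \<in> {1..M}" "\<Omega> \<in> sets m"
  shows "emeasure m (C i) \<le> emeasure m \<Omega>"
  using assms by (intro emeasure_mono_ae_subset) (auto dest: cluster_inD)

lemma cluster_in_ae_subset_mono:
  assumes "cluster_in m P M C A" "ae_subset m A B" "A \<in> sets m" "B \<in> sets m"
  shows "cluster_in m P M C B"
  using assms ae_subset_trans[OF cluster_inD(5)[OF assms(1)] assms(2)] cluster_inD(1)[OF assms(1)]
  unfolding cluster_in_def by blast

lemma h_const_le_cluster_ratio:
  "cluster_in m P M C \<Omega> \<Longrightarrow> h_const m P M \<Omega> \<le> cluster_ratio m P M C"
  unfolding h_const_def by (rule Inf_lower) blast

lemma le_h_const:
  "(\<And>C. cluster_in m P M C \<Omega> \<Longrightarrow> b \<le> cluster_ratio m P M C) \<Longrightarrow> b \<le> h_const m P M \<Omega>"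
  unfolding h_const_def by (rule Inf_greatest) blast

lemma h_const_lessE:
  assumes "h_const m P M \<Omega> < y"
  obtains C where "cluster_in m P M C \<Omega>" "cluster_ratio m P M C < y"
  using assms unfolding h_const_def Inf_less_iff by blast

lemma h_const_antimono:
  assumes "ae_subset m A B" "A \<in> sets m" "B \<in> sets m"
  shows "h_const m P M B \<le> h_const m P M A"
proof (rule le_h_const)
  fix C assume "cluster_in m P M C A"
  then have "cluster_in m P M C B" using assms by (rule cluster_in_ae_subset_mono)
  then show "h_const m P M B \<le> cluster_ratio m P M C" by (rule h_const_le_cluster_ratio)
qed

lemma P6_small_sets_large_ratio:
  assumes "P6 m P" "y < top"
  obtains e :: real where "0 < e"
    "\<And>E. E \<in> sets m \<Longrightarrow> 0 < emeasure m E \<Longrightarrow> emeasure m E \<le> ennreal e \<Longrightarrow> y < P E / emeasure m E"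
proof -
  obtain f :: "real \<Rightarrow> real" where f_top: "filterlim f at_top (at_right 0)"
    and f_le: "\<And>\<epsilon> E. 0 < \<epsilon> \<Longrightarrow> E \<in> sets m \<Longrightarrow> emeasure m E \<le> ennreal \<epsilon> \<Longrightarrow> ennreal (f \<epsilon>) * emeasure m E \<le> P E"
    using assms(1) unfolding P6_def by blast
  have "eventually (\<lambda>x. enn2real y < f x) (at_right 0)"
    using f_top by (simp add: filterlim_at_top_dense)
  then obtain b where "0 < b" and b: "\<And>x. 0 < x \<Longrightarrow> x < b \<Longrightarrow> enn2real y < f x"
    unfolding eventually_at_right_field by auto
  show thesis
  proof
    show "0 < b / 2" using \<open>0 < b\<close> by simp
    fix E assume E: "E \<in> sets m" "0 < emeasure m E" "emeasure m E \<le> ennreal (b / 2)"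
    have "emeasure m E < top" using E(3) by (metis ennreal_less_top le_less_trans)
    have "y < ennreal (f (b / 2))"
      using assms(2) b[of "b / 2"] \<open>0 < b\<close> by (cases y) (auto simp: ennreal_less_iff)
    also have "\<dots> \<le> P E / emeasure m E"
      using E f_le[of "b / 2" E] \<open>0 < b\<close> \<open>emeasure m E < top\<close>
      by (intro ennreal_le_divide_of_mult_le) auto
    finally show "y < P E / emeasure m E" .
  qed
qed

lemma h_const_tendsto_top:
  assumes "P6 m P" "1 \<le> M" "\<And>k. \<Omega>s k \<in> sets m" "(\<lambda>k. emeasure m (\<Omega>s k)) \<longlonglongrightarrow> 0"
  shows "(\<lambda>k. h_const m P M (\<Omega>s k)) \<longlonglongrightarrow> top"
proof (rule order_tendstoI)
  fix y :: ennreal assume "y < top"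
  then have "y + 1 < top" by simp
  then obtain e where "0 < e" and large_ratio:
    "\<And>E. E \<in> sets m \<Longrightarrow> 0 < emeasure m E \<Longrightarrow> emeasure m E \<le> ennreal e \<Longrightarrow> y + 1 < P E / emeasure m E"
    using P6_small_sets_large_ratio[OF assms(1)] by blast
  have "eventually (\<lambda>k. emeasure m (\<Omega>s k) < ennreal e) sequentially"
    using assms(4) \<open>0 < e\<close> by (intro order_tendstoD(2)) auto
  then show "eventually (\<lambda>k. y < h_const m P M (\<Omega>s k)) sequentially"
  proof eventually_elim
    case (elim k)
    have "y + 1 \<le> h_const m P M (\<Omega>s k)"
    proof (rule le_h_const)
      fix C assume C: "cluster_in m P M C (\<Omega>s k)"
      have "1 \<in> {1..M}" using assms(2) by simp
      then have "y + 1 < P (C 1) / emeasure m (C 1)"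
        using C elim emeasure_cluster_le[OF C _ assms(3), of 1]
        by (intro large_ratio) (auto dest: cluster_inD)
      also have "\<dots> \<le> cluster_ratio m P M C"
        using \<open>1 \<in> {1..M}\<close> by (intro member_le_sum) auto
      finally show "y + 1 \<le> cluster_ratio m P M C" by simp
    qed
    moreover have "y < y + 1" using \<open>y < top\<close> by (simp add: ennreal_add_left_cancel_less)
    ultimately show ?case by order
  qed
qed simp

lemma P5_subseq:
  fixes E :: "nat \<Rightarrow> 'a set"
  assumes "P5 m P" "0 \<le> c" "\<And>k. E k \<in> sets m \<and> P (E k) \<le> ennreal c"
  shows "\<exists>r F. strict_mono r \<and> F \<in> sets m \<and> P F \<le> ennreal c \<and> L1_conv_sets m (E \<circ> r) F"
  using assms(1)[unfolded P5_def, rule_format, OF assms(2), of E] assms(3) by blast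

lemma P5_common_subseq:
  fixes E :: "nat \<Rightarrow> nat \<Rightarrow> 'a set" and x :: "nat \<Rightarrow> nat \<Rightarrow> ennreal"
  assumes "P5 m P" "0 \<le> c" "finite I"
    and "\<And>k i. i \<in> I \<Longrightarrow> E k i \<in> sets m \<and> P (E k i) \<le> ennreal c"
  shows "\<exists>s F \<rho>. strict_mono s \<and> (\<forall>i\<in>I. F i \<in> sets m \<and> P (F i) \<le> ennreal c
           \<and> L1_conv_sets m (\<lambda>k. E (s k) i) (F i) \<and> (\<lambda>k. x (s k) i) \<longlonglongrightarrow> \<rho> i)"
  using \<open>finite I\<close> assms(4)
proof (induction I rule: finite_induct)
  case empty
  show ?case by (intro exI[of _ id]) (simp add: strict_mono_def)
next
  case (insert j I)
  then obtain s F \<rho> where s: "strict_mono s"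
    and F: "\<forall>i\<in>I. F i \<in> sets m \<and> P (F i) \<le> ennreal c
           \<and> L1_conv_sets m (\<lambda>k. E (s k) i) (F i) \<and> (\<lambda>k. x (s k) i) \<longlonglongrightarrow> \<rho> i"
    by auto
  obtain \<sigma> r where r: "strict_mono r" "((\<lambda>k. x (s k) j) \<circ> r) \<longlonglongrightarrow> \<sigma>"
    using compact_complete_linorder by blast
  have "E (s (r k)) j \<in> sets m \<and> P (E (s (r k)) j) \<le> ennreal c" for k
    using insert.prems by simp
  from P5_subseq[OF assms(1,2), of "\<lambda>k. E (s (r k)) j", OF this]
  obtain r' G where r': "strict_mono r'" and G: "G \<in> sets m" "P G \<le> ennreal c"
    and G_lim: "L1_conv_sets m ((\<lambda>k. E (s (r k)) j) \<circ> r') G"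
    by blast
  let ?s = "s \<circ> (r \<circ> r')"
  have mono: "strict_mono (r \<circ> r')" using r r' by (simp add: strict_mono_o)
  have "\<forall>i\<in>insert j I. (F(j := G)) i \<in> sets m \<and> P ((F(j := G)) i) \<le> ennreal c
           \<and> L1_conv_sets m (\<lambda>k. E (?s k) i) ((F(j := G)) i) \<and> (\<lambda>k. x (?s k) i) \<longlonglongrightarrow> (\<rho>(j := \<sigma>)) i"
  proof
    fix i assume "i \<in> insert j I"
    then consider "i = j" | "i \<in> I" "i \<noteq> j" by blast
    then show "(F(j := G)) i \<in> sets m \<and> P ((F(j := G)) i) \<le> ennreal c
           \<and> L1_conv_sets m (\<lambda>k. E (?s k) i) ((F(j := G)) i) \<and> (\<lambda>k. x (?s k) i) \<longlonglongrightarrow> (\<rho>(j := \<sigma>)) i"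
    proof cases
      case 1
      then show ?thesis
        using G G_lim LIMSEQ_subseq_LIMSEQ[OF r(2) r'(1)] by (simp add: o_def)
    next
      case 2
      then show ?thesis
        using F L1_conv_sets_subseq[OF _ mono, of m "\<lambda>k. E (s k) i"]
          LIMSEQ_subseq_LIMSEQ[OF _ mono, of "\<lambda>k. x (s k) i"] by (simp add: o_def)
    qed
  qed
  moreover have "strict_mono ?s" using s mono by (rule strict_mono_o)
  ultimately show ?case
    by (intro exI[of _ ?s] exI[of _ "F(j := G)"] exI[of _ "\<rho>(j := \<sigma>)"] conjI)
qed

lemma cluster_in_L1_limit:
  assumes D: "\<And>k. cluster_in m P M (D k) (\<Omega>s k)" and \<Omega>s: "L1_conv_sets m \<Omega>s \<Omega>"
    and F: "\<And>i. i \<in> {1..M} \<Longrightarrow> L1_conv_sets m (\<lambda>k. D k i) (F i)"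
    and sets: "\<And>k. \<Omega>s k \<in> sets m" "\<Omega> \<in> sets m" "\<And>i. i \<in> {1..M} \<Longrightarrow> F i \<in> sets m"
    and nondegenerate: "\<And>i. i \<in> {1..M} \<Longrightarrow> 0 < emeasure m (F i)" "\<And>i. i \<in> {1..M} \<Longrightarrow> emeasure m (F i) < top"
      "\<And>i. i \<in> {1..M} \<Longrightarrow> P (F i) < top"
  shows "cluster_in m P M F \<Omega>"
  unfolding cluster_in_def is_cluster_def
proof (intro conjI ballI impI)
  fix i assume i: "i \<in> {1..M}"
  show "F i \<in> sets m" "0 < emeasure m (F i)" "emeasure m (F i) < top" "P (F i) < top"
    using sets nondegenerate i by auto
  show "ae_subset m (F i) \<Omega>"
    by (rule ae_subset_L1_limit[OF F[OF i] \<Omega>s cluster_inD(5)[OF D i] cluster_inD(1)[OF D i]])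
      (simp_all add: sets(1,2) sets(3)[OF i])
next
  fix i j assume i: "i \<in> {1..M}" and j: "j \<in> {1..M}" and "i \<noteq> j"
  show "emeasure m (F i \<inter> F j) = 0"
    by (rule null_Int_L1_limit[OF F[OF i] F[OF j] cluster_in_null_Int[OF D i j \<open>i \<noteq> j\<close>]
          cluster_inD(1)[OF D i] _ cluster_inD(1)[OF D j]]) (simp_all add: sets(3)[OF i] sets(3)[OF j])
qed

lemma P4_ratio_le_lim:
  assumes "P4 m P" "L1_conv_sets m E F" "\<And>k. E k \<in> sets m" "F \<in> sets m"
    and "\<And>k. 0 < emeasure m (E k)" "\<And>k. emeasure m (E k) < top" "0 < emeasure m F" "emeasure m F < top"
    and ratio: "(\<lambda>k. P (E k) / emeasure m (E k)) \<longlonglongrightarrow> \<rho>"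
  shows "P F / emeasure m F \<le> \<rho>"
proof (rule divide_le_posI_ennreal)
  have "P (E k) = P (E k) / emeasure m (E k) * emeasure m (E k)" for k
    using assms(5,6)[of k] by (simp add: ennreal_divide_times)
  moreover have "(\<lambda>k. P (E k) / emeasure m (E k) * emeasure m (E k)) \<longlonglongrightarrow> \<rho> * emeasure m F"
    using ratio L1_conv_sets_emeasure[OF assms(2-4)] assms(7,8) by (intro tendsto_mult_ennreal) auto
  ultimately have "(\<lambda>k. P (E k)) \<longlonglongrightarrow> \<rho> * emeasure m F" by simp
  then have "liminf (\<lambda>k. P (E k)) = \<rho> * emeasure m F" by (intro lim_imp_Liminf) auto
  moreover have "P F \<le> liminf (\<lambda>k. P (E k))"
    using assms(1-4) unfolding P4_def by blast
  ultimately show "P F \<le> emeasure m F * \<rho>" by (simp add: mult.commute)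
qed (fact assms(7))

lemma h_const_le_of_bounded_clusters:
  assumes "P4 m P" "P5 m P" "0 < e" "0 \<le> c"
    and \<Omega>s: "\<And>k. \<Omega>s k \<in> sets m" "\<Omega> \<in> sets m" "emeasure m \<Omega> < top" "L1_conv_sets m \<Omega>s \<Omega>"
    and D: "\<And>k. cluster_in m P M (D k) (\<Omega>s k)" "\<And>k. cluster_ratio m P M (D k) \<le> y"
    and bounds: "\<And>k i. i \<in> {1..M} \<Longrightarrow> ennreal e \<le> emeasure m (D k i) \<and> P (D k i) \<le> ennreal c"
  shows "h_const m P M \<Omega> \<le> y"
proof -
  let ?r = "\<lambda>k i. P (D k i) / emeasure m (D k i)"
  have "\<exists>s F \<rho>. strict_mono s \<and> (\<forall>i\<in>{1..M}. F i \<in> sets m \<and> P (F i) \<le> ennreal c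
           \<and> L1_conv_sets m (\<lambda>k. D (s k) i) (F i) \<and> (\<lambda>k. ?r (s k) i) \<longlonglongrightarrow> \<rho> i)"
    using assms(2,4) bounds cluster_inD(1)[OF D(1)] by (intro P5_common_subseq) simp_all
  then obtain s F \<rho> where "strict_mono s"
    and F: "\<And>i. i \<in> {1..M} \<Longrightarrow> F i \<in> sets m \<and> P (F i) \<le> ennreal c
           \<and> L1_conv_sets m (\<lambda>k. D (s k) i) (F i) \<and> (\<lambda>k. ?r (s k) i) \<longlonglongrightarrow> \<rho> i"
    by blast
  have \<Omega>s_subseq: "L1_conv_sets m (\<lambda>k. \<Omega>s (s k)) \<Omega>"
    using L1_conv_sets_subseq[OF \<Omega>s(4) \<open>strict_mono s\<close>] by (simp add: o_def)
  have F_sets: "F i \<in> sets m" and F_P: "P (F i) \<le> ennreal c"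
    and F_lim: "L1_conv_sets m (\<lambda>k. D (s k) i) (F i)" and \<rho>_lim: "(\<lambda>k. ?r (s k) i) \<longlonglongrightarrow> \<rho> i"
    if "i \<in> {1..M}" for i
    using F[OF that] by auto
  have D_sets: "D k i \<in> sets m" if "i \<in> {1..M}" for k i
    using cluster_inD(1)[OF D(1) that] .
  have F_ae: "ae_subset m (F i) \<Omega>" if i: "i \<in> {1..M}" for i
    by (rule ae_subset_L1_limit[OF F_lim[OF i] \<Omega>s_subseq cluster_inD(5)[OF D(1) i] D_sets[OF i]
          F_sets[OF i] \<Omega>s(1,2)])
  have F_pos: "0 < emeasure m (F i)" if i: "i \<in> {1..M}" for i
  proof -
    have "ennreal e \<le> emeasure m (F i)"
    proof (rule LIMSEQ_le_const)
      show "(\<lambda>k. emeasure m (D (s k) i)) \<longlonglongrightarrow> emeasure m (F i)"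
        by (rule L1_conv_sets_emeasure[OF F_lim[OF i] D_sets[OF i] F_sets[OF i]])
    qed (use bounds[OF i] in blast)
    then show ?thesis using \<open>0 < e\<close> by (meson ennreal_less_zero_iff order.strict_trans2)
  qed
  have F_fin: "emeasure m (F i) < top" if i: "i \<in> {1..M}" for i
    using emeasure_mono_ae_subset[OF F_ae[OF i] F_sets[OF i] \<Omega>s(2)] \<Omega>s(3) by (rule order.strict_trans1)
  have F_P_fin: "P (F i) < top" if i: "i \<in> {1..M}" for i
    using F_P[OF i] ennreal_less_top by (rule order.strict_trans1)
  have "cluster_in m P M F \<Omega>"
    by (rule cluster_in_L1_limit[OF D(1) \<Omega>s_subseq F_lim \<Omega>s(1,2) F_sets F_pos F_fin F_P_fin])
  then have "h_const m P M \<Omega> \<le> cluster_ratio m P M F"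
    by (rule h_const_le_cluster_ratio)
  also have "\<dots> \<le> (\<Sum>i = 1..M. \<rho> i)"
  proof (rule sum_mono)
    fix i assume i: "i \<in> {1..M}"
    show "P (F i) / emeasure m (F i) \<le> \<rho> i"
      by (rule P4_ratio_le_lim[OF assms(1) F_lim[OF i] D_sets[OF i] F_sets[OF i]
            cluster_inD(2,3)[OF D(1) i] F_pos[OF i] F_fin[OF i] \<rho>_lim[OF i]])
  qed
  also have "\<dots> \<le> y"
  proof (rule LIMSEQ_le_const2)
    show "(\<lambda>k. cluster_ratio m P M (D (s k))) \<longlonglongrightarrow> (\<Sum>i = 1..M. \<rho> i)"
      using \<rho>_lim by (rule tendsto_sum)
  qed (use D(2) in auto)
  finally show ?thesis .
qed

lemma cluster_member_bounds:
  assumes "cluster_in m P M C \<Omega>" "i \<in> {1..M}" "\<Omega> \<in> sets m" "cluster_ratio m P M C < y"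
  shows "P (C i) / emeasure m (C i) < y" "P (C i) \<le> y * emeasure m \<Omega>"
proof -
  have "P (C i) / emeasure m (C i) \<le> cluster_ratio m P M C"
    using assms(2) by (intro member_le_sum) auto
  then show ratio: "P (C i) / emeasure m (C i) < y" using assms(4) by order
  have "P (C i) = P (C i) / emeasure m (C i) * emeasure m (C i)"
    using cluster_inD(2,3)[OF assms(1,2)] by (simp add: ennreal_divide_times)
  also have "\<dots> \<le> y * emeasure m \<Omega>"
    using ratio emeasure_cluster_le[OF assms(1-3)] by (intro mult_mono) auto
  finally show "P (C i) \<le> y * emeasure m \<Omega>" .
qed

lemma h_const_le_liminf:
  assumes "P4 m P" "P5 m P" "P6 m P"
    and \<Omega>s: "\<And>k. \<Omega>s k \<in> sets m" "\<Omega> \<in> sets m" "emeasure m \<Omega> < top" "L1_conv_sets m \<Omega>s \<Omega>"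
  shows "h_const m P M \<Omega> \<le> liminf (\<lambda>k. h_const m P M (\<Omega>s k))"
proof (rule dense_ge)
  fix y assume y: "liminf (\<lambda>k. h_const m P M (\<Omega>s k)) < y"
  show "h_const m P M \<Omega> \<le> y"
  proof (cases "y = top")
    case False
    then obtain t where t: "y = ennreal t" "0 \<le> t" by (cases y rule: ennreal_cases) auto
    define R where "R = enn2real (emeasure m \<Omega>) + 1"
    have R: "emeasure m \<Omega> < ennreal R" "0 \<le> R"
      using \<Omega>s(3) by (cases "emeasure m \<Omega>") (auto simp: R_def ennreal_less_iff)
    have "\<not> eventually (\<lambda>k. y \<le> h_const m P M (\<Omega>s k)) sequentially"
      using y by (metis Liminf_bounded leD)
    then have "frequently (\<lambda>k. h_const m P M (\<Omega>s k) < y) sequentially"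
      by (simp add: not_eventually not_le)
    moreover have "eventually (\<lambda>k. emeasure m (\<Omega>s k) < ennreal R) sequentially"
      using L1_conv_sets_emeasure[OF \<Omega>s(4,1,2)] R(1) by (rule order_tendstoD(2))
    ultimately have "frequently (\<lambda>k. h_const m P M (\<Omega>s k) < y \<and> emeasure m (\<Omega>s k) < ennreal R) sequentially"
      by (rule frequently_eventually_frequently)
    then obtain s :: "nat \<Rightarrow> nat" where "strict_mono s"
      and s: "\<And>k. h_const m P M (\<Omega>s (s k)) < y" "\<And>k. emeasure m (\<Omega>s (s k)) < ennreal R"
      by (rule frequently_imp_strict_mono_subseq) blast
    have "\<exists>C. cluster_in m P M C (\<Omega>s (s k)) \<and> cluster_ratio m P M C < y" for k
      by (rule h_const_lessE[OF s(1)[of k]]) blast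
    then obtain D where D: "\<And>k. cluster_in m P M (D k) (\<Omega>s (s k))" "\<And>k. cluster_ratio m P M (D k) < y"
      by metis
    txt \<open>Chambers of measure at most \<open>e\<close> would have ratio above \<open>y\<close>: (P.6) keeps the
      chambers from vanishing in the limit.\<close>
    obtain e where "0 < e" and large_ratio:
      "\<And>E. E \<in> sets m \<Longrightarrow> 0 < emeasure m E \<Longrightarrow> emeasure m E \<le> ennreal e \<Longrightarrow> y < P E / emeasure m E"
      using P6_small_sets_large_ratio[OF assms(3)] False by (metis top.not_eq_extremum)
    have bounds: "ennreal e \<le> emeasure m (D k i) \<and> P (D k i) \<le> ennreal (t * R)" if i: "i \<in> {1..M}" for k i
    proof
      note ratio = cluster_member_bounds[OF D(1) i \<Omega>s(1) D(2)]
      show "ennreal e \<le> emeasure m (D k i)"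
        using large_ratio[OF cluster_inD(1,2)[OF D(1) i]] ratio(1) by (meson linear not_less_iff_gr_or_eq)
      have "P (D k i) \<le> y * emeasure m (\<Omega>s (s k))" by (rule ratio(2))
      also have "\<dots> \<le> ennreal t * ennreal R" using t(1) s(2)[of k] by (simp add: mult_left_mono)
      finally show "P (D k i) \<le> ennreal (t * R)" using t R by (simp add: ennreal_mult)
    qed
    show ?thesis
    proof (rule h_const_le_of_bounded_clusters[where c = "t * R", OF assms(1,2) \<open>0 < e\<close> _ _ \<Omega>s(2,3) _ D(1)])
      show "L1_conv_sets m (\<lambda>k. \<Omega>s (s k)) \<Omega>"
        using L1_conv_sets_subseq[OF \<Omega>s(4) \<open>strict_mono s\<close>] by (simp add: o_def)
    qed (use t R \<Omega>s(1) D(2) bounds in \<open>auto intro: less_imp_le\<close>)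
  qed simp
qed

lemma P3_P4_eventually_Int_le:
  assumes "P3 m P" "P4 m P"
    and \<Omega>s: "\<And>k. \<Omega>s k \<in> sets m" "\<Omega> \<in> sets m" "L1_conv_sets m \<Omega>s \<Omega>"
    and P: "P \<Omega> < top" "(\<lambda>k. P (\<Omega>s k)) \<longlonglongrightarrow> P \<Omega>"
    and C: "C \<in> sets m" "ae_subset m C \<Omega>" and "0 < e"
  shows "eventually (\<lambda>k. P (C \<inter> \<Omega>s k) \<le> P C + ennreal e) sequentially"
proof -
  have "L1_conv_sets m (\<lambda>k. C \<union> \<Omega>s k) \<Omega>"
    using \<Omega>s(3) C(2) \<Omega>s(1,2) C(1) by (rule L1_conv_sets_Un_ae_subset)
  then have "P \<Omega> \<le> liminf (\<lambda>k. P (C \<union> \<Omega>s k))"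
    using assms(2) C(1) \<Omega>s(1,2) unfolding P4_def by simp
  then have "eventually (\<lambda>k. P \<Omega> < P (C \<union> \<Omega>s k) + ennreal (e / 2)) sequentially"
    using P(1) \<open>0 < e\<close> by (intro eventually_less_add_of_le_Liminf) auto
  moreover have "eventually (\<lambda>k. P (\<Omega>s k) < P \<Omega> + ennreal (e / 2)) sequentially"
    using P \<open>0 < e\<close> by (intro order_tendstoD(2)) (auto simp: ennreal_add_left_cancel_less)
  ultimately show ?thesis
  proof eventually_elim
    case (elim k)
    have "P (C \<inter> \<Omega>s k) + P \<Omega> \<le> P (C \<inter> \<Omega>s k) + (P (C \<union> \<Omega>s k) + ennreal (e / 2))"
      using elim(1) by (intro add_left_mono less_imp_le)
    also have "\<dots> \<le> P C + P (\<Omega>s k) + ennreal (e / 2)"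
      using assms(1) C(1) \<Omega>s(1) unfolding P3_def by (simp add: add.assoc[symmetric] add_right_mono)
    also have "\<dots> \<le> P C + (P \<Omega> + ennreal (e / 2)) + ennreal (e / 2)"
      using elim(2) by (intro add_mono) auto
    also have "\<dots> = P \<Omega> + (P C + ennreal e)"
      using \<open>0 < e\<close> by (simp add: algebra_simps flip: ennreal_plus)
    finally have "P \<Omega> + P (C \<inter> \<Omega>s k) \<le> P \<Omega> + (P C + ennreal e)"
      by (simp add: add.commute)
    then show ?case using P(1) by (auto simp: ennreal_add_left_cancel_le)
  qed
qed

lemma cluster_in_Int:
  assumes C: "cluster_in m P M C \<Omega>" and "\<Omega>' \<in> sets m"
    and "\<And>i. i \<in> {1..M} \<Longrightarrow> 0 < emeasure m (C i \<inter> \<Omega>')" "\<And>i. i \<in> {1..M} \<Longrightarrow> P (C i \<inter> \<Omega>') < top"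
  shows "cluster_in m P M (\<lambda>i. C i \<inter> \<Omega>') \<Omega>'"
  unfolding cluster_in_def is_cluster_def
proof (intro conjI ballI impI)
  fix i assume i: "i \<in> {1..M}"
  show "C i \<inter> \<Omega>' \<in> sets m" using cluster_inD(1)[OF C i] assms(2) by auto
  show "0 < emeasure m (C i \<inter> \<Omega>')" "P (C i \<inter> \<Omega>') < top" using assms(3,4) i by auto
  have "emeasure m (C i \<inter> \<Omega>') \<le> emeasure m (C i)"
    using cluster_inD(1)[OF C i] by (intro emeasure_mono) auto
  then show "emeasure m (C i \<inter> \<Omega>') < top" using cluster_inD(3)[OF C i] by (rule order.strict_trans1)
  show "ae_subset m (C i \<inter> \<Omega>') \<Omega>'" by (simp add: ae_subset_def Diff_eq)
next
  fix i j assume "i \<in> {1..M}" "j \<in> {1..M}" "i \<noteq> j"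
  then have "emeasure m (C i \<inter> \<Omega>' \<inter> (C j \<inter> \<Omega>')) \<le> emeasure m (C i \<inter> C j)"
    using cluster_inD(1)[OF C] by (intro emeasure_mono) auto
  then show "emeasure m (C i \<inter> \<Omega>' \<inter> (C j \<inter> \<Omega>')) = 0"
    using cluster_in_null_Int[OF C \<open>i \<in> {1..M}\<close> \<open>j \<in> {1..M}\<close> \<open>i \<noteq> j\<close>] by simp
qed

lemma limsup_h_const_le:
  assumes "P3 m P" "P4 m P"
    and \<Omega>s: "\<And>k. \<Omega>s k \<in> sets m" "\<Omega> \<in> sets m" "L1_conv_sets m \<Omega>s \<Omega>"
    and P: "P \<Omega> < top" "(\<lambda>k. P (\<Omega>s k)) \<longlonglongrightarrow> P \<Omega>"
  shows "limsup (\<lambda>k. h_const m P M (\<Omega>s k)) \<le> h_const m P M \<Omega>"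
proof (rule le_h_const)
  fix C assume C: "cluster_in m P M C \<Omega>"
  txt \<open>Capping from below by \<open>P (C i)\<close> turns the one-sided bound on \<open>P (C i \<inter> \<Omega>s k)\<close>
    into convergence.\<close>
  define a where "a k i = max (P (C i \<inter> \<Omega>s k)) (P (C i))" for k i
  have measure_lim: "(\<lambda>k. emeasure m (C i \<inter> \<Omega>s k)) \<longlonglongrightarrow> emeasure m (C i)" if i: "i \<in> {1..M}" for i
    using L1_conv_sets_Int_ae_subset[OF \<Omega>s(3) cluster_inD(5)[OF C i] \<Omega>s(1,2) cluster_inD(1)[OF C i]]
      cluster_inD(1)[OF C i] \<Omega>s(1)
    by (intro L1_conv_sets_emeasure) auto
  have a_lim: "(\<lambda>k. a k i) \<longlonglongrightarrow> P (C i)" if i: "i \<in> {1..M}" for i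
  proof (rule tendsto_ennreal_epsilon)
    fix e :: real assume "0 < e"
    show "eventually (\<lambda>k. a k i \<le> P (C i) + ennreal e) sequentially"
      using P3_P4_eventually_Int_le[OF assms(1,2) \<Omega>s P cluster_inD(1,5)[OF C i] \<open>0 < e\<close>]
      by eventually_elim (simp add: a_def add_increasing2)
    show "eventually (\<lambda>k. P (C i) \<le> a k i + ennreal e) sequentially"
      by (simp add: a_def add_increasing2)
  qed
  have ratio_lim: "(\<lambda>k. \<Sum>i = 1..M. a k i / emeasure m (C i \<inter> \<Omega>s k)) \<longlonglongrightarrow> cluster_ratio m P M C"
    using a_lim measure_lim cluster_inD(2,3)[OF C] by (intro tendsto_sum tendsto_divide_ennreal) auto
  have "eventually (\<lambda>k. 0 < emeasure m (C i \<inter> \<Omega>s k) \<and> P (C i \<inter> \<Omega>s k) < top) sequentially"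
    if i: "i \<in> {1..M}" for i
  proof -
    have "eventually (\<lambda>k. 0 < emeasure m (C i \<inter> \<Omega>s k)) sequentially"
      using measure_lim[OF i] cluster_inD(2)[OF C i] by (rule order_tendstoD(1))
    moreover have "eventually (\<lambda>k. P (C i \<inter> \<Omega>s k) \<le> P (C i) + 1) sequentially"
      using P3_P4_eventually_Int_le[OF assms(1,2) \<Omega>s P cluster_inD(1,5)[OF C i], of 1] by simp
    ultimately show ?thesis
      by eventually_elim (use cluster_inD(4)[OF C i] in \<open>auto simp: order.strict_trans1\<close>)
  qed
  then have "eventually (\<lambda>k. \<forall>i\<in>{1..M}. 0 < emeasure m (C i \<inter> \<Omega>s k) \<and> P (C i \<inter> \<Omega>s k) < top) sequentially"
    by (intro eventually_ball_finite) auto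
  then have "eventually (\<lambda>k. h_const m P M (\<Omega>s k) \<le> (\<Sum>i = 1..M. a k i / emeasure m (C i \<inter> \<Omega>s k))) sequentially"
  proof eventually_elim
    case (elim k)
    have "h_const m P M (\<Omega>s k) \<le> (\<Sum>i = 1..M. P (C i \<inter> \<Omega>s k) / emeasure m (C i \<inter> \<Omega>s k))"
      using elim by (intro h_const_le_cluster_ratio cluster_in_Int[OF C \<Omega>s(1)]) auto
    also have "\<dots> \<le> (\<Sum>i = 1..M. a k i / emeasure m (C i \<inter> \<Omega>s k))"
      by (intro sum_mono divide_right_mono_ennreal) (simp add: a_def)
    finally show ?case .
  qed
  then have "limsup (\<lambda>k. h_const m P M (\<Omega>s k)) \<le> limsup (\<lambda>k. \<Sum>i = 1..M. a k i / emeasure m (C i \<inter> \<Omega>s k))"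
    by (rule Limsup_mono)
  also have "\<dots> = cluster_ratio m P M C"
    using ratio_lim by (intro lim_imp_Limsup) auto
  finally show "limsup (\<lambda>k. h_const m P M (\<Omega>s k)) \<le> cluster_ratio m P M C" .
qed

theorem proposition3p9:
  fixes m :: "'a measure" and P :: "'a set \<Rightarrow> ennreal"
    and N M :: nat and \<Omega>s :: "nat \<Rightarrow> 'a set"
  assumes "sigma_finite_measure m"
    and "proper_functional m P"
    and "\<And>k. \<Omega>s k \<in> sets m"
    and "\<And>k. admissible m P N (\<Omega>s k)"
    and "1 \<le> M" and "M \<le> N"
  shows "(\<forall>A B. admissible m P N A \<longrightarrow> admissible m P N B \<longrightarrow> ae_subset m A B
            \<longrightarrow> h_const m P M A \<ge> h_const m P M B)
    \<and> (P6 m P \<longrightarrow> ((\<lambda>k. emeasure m (\<Omega>s k)) \<longlonglongrightarrow> 0)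
            \<longrightarrow> ((\<lambda>k. h_const m P M (\<Omega>s k)) \<longlonglongrightarrow> top))
    \<and> (\<forall>\<Omega>. P4 m P \<longrightarrow> P5 m P \<longrightarrow> P6 m P \<longrightarrow> \<Omega> \<in> sets m
            \<longrightarrow> 0 < emeasure m \<Omega> \<longrightarrow> emeasure m \<Omega> < top \<longrightarrow> L1_conv_sets m \<Omega>s \<Omega>
            \<longrightarrow> (h_const m P M \<Omega> \<le> liminf (\<lambda>k. h_const m P M (\<Omega>s k))
                \<and> (P3 m P \<longrightarrow> P \<Omega> < top \<longrightarrow> ((\<lambda>k. P (\<Omega>s k)) \<longlonglongrightarrow> P \<Omega>)
                    \<longrightarrow> ((\<lambda>k. h_const m P M (\<Omega>s k)) \<longlonglongrightarrow> h_const m P M \<Omega>))))"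
proof (intro conjI allI impI)
  fix A B assume "admissible m P N A" "admissible m P N B" "ae_subset m A B"
  then show "h_const m P M B \<le> h_const m P M A"
    unfolding admissible_def by (intro h_const_antimono) auto
next
  assume "P6 m P" "(\<lambda>k. emeasure m (\<Omega>s k)) \<longlonglongrightarrow> 0"
  then show "(\<lambda>k. h_const m P M (\<Omega>s k)) \<longlonglongrightarrow> top"
    using h_const_tendsto_top assms(3,5) by blast
next
  fix \<Omega> assume "P4 m P" "P5 m P" "P6 m P" "\<Omega> \<in> sets m" "0 < emeasure m \<Omega>"
    "emeasure m \<Omega> < top" "L1_conv_sets m \<Omega>s \<Omega>"
  then show "h_const m P M \<Omega> \<le> liminf (\<lambda>k. h_const m P M (\<Omega>s k))"
    using h_const_le_liminf assms(3) by blast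
next
  fix \<Omega> assume "P4 m P" "P5 m P" "P6 m P" "\<Omega> \<in> sets m" "0 < emeasure m \<Omega>"
    "emeasure m \<Omega> < top" "L1_conv_sets m \<Omega>s \<Omega>"
    and "P3 m P" "P \<Omega> < top" "(\<lambda>k. P (\<Omega>s k)) \<longlonglongrightarrow> P \<Omega>"
  then have "h_const m P M \<Omega> \<le> liminf (\<lambda>k. h_const m P M (\<Omega>s k))"
    and "limsup (\<lambda>k. h_const m P M (\<Omega>s k)) \<le> h_const m P M \<Omega>"
    using h_const_le_liminf limsup_h_const_le assms(3) by blast+
  moreover have "liminf (\<lambda>k. h_const m P M (\<Omega>s k)) \<le> limsup (\<lambda>k. h_const m P M (\<Omega>s k))"
    by (rule Liminf_le_Limsup) simp
  ultimately show "(\<lambda>k. h_const m P M (\<Omega>s k)) \<longlonglongrightarrow> h_const m P M \<Omega>"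
    by (intro Liminf_eq_Limsup) auto
qed

end
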